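(* For every $n\ge0$ there is a push-out diagram of sets $$\begin{array}{ccc}\mathrm{Hom}(\mathbb{Z}^n,\mathbb{Z}/2) & \longrightarrow & \mathrm{Hom}(\mathbb{Z}^n,(\mathbb{Z}/2)^2)/\Sigma_3\\ \downarrow && \downarrow\\ \ast & \longrightarrow & \pi_0\,\mathrm{Hom}(\mathbb{Z}^n,SO(3))\end{array}$$ where $\Sigma_3$ acts on $(\mathbb{Z}/2)^2$ by permuting its three non-trivial elements, the top map is induced by one of the inclusions $\mathbb{Z}/2\subset(\mathbb{Z}/2)^2$ followed by the quotient, the right map is induced by an embedding $(\mathbb{Z}/2)^2\cong\bar Q\subset SO(3)$, and the bottom map picks out the component of the trivial homomorphism.
   Context: $\mathrm{Hom}(\mathbb{Z}^n,SO(3))$ is the space of $n$-tuples of pairwise commuting elements of $SO(3)$ (subspace of $SO(3)^n$), and $\pi_0$ is its set of path components. $\bar Q\cong(\mathbb{Z}/2)^2$ is the image in $SO(3)$ of the quaternion group $Q=\{\pm1,\pm\mathbf{i},\pm\mathbf{j},\pm\mathbf{k}\}\subset SU(2)$ under the double cover $R:SU(2)\to SO(3)$ (e.g. the diagonal matrices with entries $\pm1$), and the subgroup $\mathbb{Z}/2$ is $\bar Q\cap\bar T$ for a maximal torus $\bar T$ of $SO(3)$. *)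

theory Defs
  imports "HOL-Analysis.Analysis" "HOL-Library.Z2"
begin

text \<open>Pushout of sets via the universal property (tested against all maps into a set of type 'z).
  Objects are carrier sets, maps are functions considered on the carriers.\<close>
definition set_pushout ::
  "'z itself \<Rightarrow> 'a set \<Rightarrow> 'b set \<Rightarrow> 'c set \<Rightarrow> 'd set \<Rightarrow>
   ('a \<Rightarrow> 'b) \<Rightarrow> ('a \<Rightarrow> 'c) \<Rightarrow> ('b \<Rightarrow> 'd) \<Rightarrow> ('c \<Rightarrow> 'd) \<Rightarrow> bool" where
  "set_pushout _ A B C D f g h k \<longleftrightarrow>
     f \<in> A \<rightarrow> B \<and> g \<in> A \<rightarrow> C \<and> h \<in> B \<rightarrow> D \<and> k \<in> C \<rightarrow> D \<and>
     (\<forall>a\<in>A. h (f a) = k (g a)) \<and>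
     (\<forall>(u::'b \<Rightarrow> 'z) (v::'c \<Rightarrow> 'z). (\<forall>a\<in>A. u (f a) = v (g a)) \<longrightarrow>
        (\<exists>w. (\<forall>b\<in>B. w (h b) = u b) \<and> (\<forall>c\<in>C. w (k c) = v c) \<and>
             (\<forall>w'. (\<forall>b\<in>B. w' (h b) = u b) \<and> (\<forall>c\<in>C. w' (k c) = v c) \<longrightarrow>
                   (\<forall>d\<in>D. w' d = w d))))"

definition SO3 :: "(real^3^3) set" where
  "SO3 = {A. transpose A ** A = mat 1 \<and> det A = 1}"

text \<open>Hom(Z^n, SO(3)): n-tuples (indexed by {..<n}, extensional) of pairwise commuting elements.\<close>
definition HomSO3 :: "nat \<Rightarrow> (nat \<Rightarrow> real^3^3) set" where
  "HomSO3 n = {x \<in> {..<n} \<rightarrow>\<^sub>E SO3. \<forall>i<n. \<forall>j<n. x i ** x j = x j ** x i}"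

definition HomSO3_top :: "nat \<Rightarrow> (nat \<Rightarrow> real^3^3) topology" where
  "HomSO3_top n = subtopology (product_topology (\<lambda>_. euclidean) {..<n}) (HomSO3 n)"

definition pi0_HomSO3 :: "nat \<Rightarrow> (nat \<Rightarrow> real^3^3) set set" where
  "pi0_HomSO3 n = path_components_of (HomSO3_top n)"

text \<open>Hom(Z^n, Z/2) and Hom(Z^n, (Z/2)^2) as n-tuples (Z^n is free abelian on n generators).\<close>
definition HomZ2 :: "nat \<Rightarrow> (nat \<Rightarrow> bit) set" where
  "HomZ2 n = {..<n} \<rightarrow>\<^sub>E (UNIV :: bit set)"

definition HomV4 :: "nat \<Rightarrow> (nat \<Rightarrow> bit \<times> bit) set" where
  "HomV4 n = {..<n} \<rightarrow>\<^sub>E (UNIV :: (bit \<times> bit) set)"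

text \<open>Sigma_3 acting on (Z/2)^2: all permutations of (Z/2)^2 fixing 0, i.e. all permutations
  of the three non-trivial elements.\<close>
definition Sigma3 :: "(bit \<times> bit \<Rightarrow> bit \<times> bit) set" where
  "Sigma3 = {\<sigma>. bij \<sigma> \<and> \<sigma> (0, 0) = (0, 0)}"

definition V4_orbit :: "nat \<Rightarrow> (nat \<Rightarrow> bit \<times> bit) \<Rightarrow> (nat \<Rightarrow> bit \<times> bit) set" where
  "V4_orbit n x = (\<lambda>\<sigma>. restrict (\<sigma> \<circ> x) {..<n}) ` Sigma3"

definition HomV4_mod_Sigma3 :: "nat \<Rightarrow> (nat \<Rightarrow> bit \<times> bit) set set" where
  "HomV4_mod_Sigma3 n = V4_orbit n ` HomV4 n"

definition top_map :: "nat \<Rightarrow> (nat \<Rightarrow> bit) \<Rightarrow> (nat \<Rightarrow> bit \<times> bit) set" where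
  "top_map n a = V4_orbit n (restrict (\<lambda>i. (a i, 0)) {..<n})"

definition sgnbit :: "bit \<Rightarrow> real" where
  "sgnbit b = (if b = 0 then 1 else -1)"

definition Qbar_emb :: "bit \<times> bit \<Rightarrow> real^3^3" where
  "Qbar_emb p = (\<chi> i j. if i = j then
        (if i = 1 then sgnbit (fst p) else if i = 2 then sgnbit (snd p)
         else sgnbit (fst p) * sgnbit (snd p)) else 0)"

definition right_rep :: "nat \<Rightarrow> (nat \<Rightarrow> bit \<times> bit) \<Rightarrow> (nat \<Rightarrow> real^3^3) set" where
  "right_rep n x = path_component_of_set (HomSO3_top n) (restrict (Qbar_emb \<circ> x) {..<n})"

text \<open>Right map on orbits (via a representative; well-definedness is asserted in the theorem).\<close>
definition right_map :: "nat \<Rightarrow> (nat \<Rightarrow> bit \<times> bit) set \<Rightarrow> (nat \<Rightarrow> real^3^3) set" where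
  "right_map n Orb = right_rep n (SOME x. x \<in> HomV4 n \<and> V4_orbit n x = Orb)"

definition bottom_map :: "nat \<Rightarrow> unit \<Rightarrow> (nat \<Rightarrow> real^3^3) set" where
  "bottom_map n _ = path_component_of_set (HomSO3_top n) (restrict (\<lambda>_. mat 1) {..<n})"

end

theory Submission
  imports Defs
begin

text \<open>Commuting rotations can be conjugated simultaneously either into the maximal torus of
  rotations about one axis, or into the diagonal group \<open>Qbar\<close>; the second case is forced
  as soon as two of them are half-turns about perpendicular axes. As \<open>SO(3)\<close> is path
  connected, conjugation preserves path components, and a torus tuple is joined to the trivial
  tuple through the torus. Hence every component contains a \<open>Qbar\<close>-tuple, and
  \<open>Qbar\<close>-tuples in one \<open>\<Sigma>\<^sub>3\<close>-orbit lie in one component, since \<open>\<Sigma>\<^sub>3\<close> is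
  realised by conjugation with signed permutation matrices.

  Conversely, for commuting \<open>A, B\<close> the number \<open>tr A + tr B + tr AB\<close> is either \<open>-3\<close>
  (exactly when \<open>A, B\<close> are distinct half-turns about perpendicular axes) or \<open>\<ge> 0\<close>, so
  its sign is constant along paths. Thus the set of index pairs \<open>(i, j)\<close> for which
  \<open>x\<^sub>i, x\<^sub>j\<close> generate \<open>(\<int>/2)\<^sup>2\<close> is an invariant of components. A tuple having such a
  pair is determined by this pattern up to \<open>\<Sigma>\<^sub>3\<close>; a tuple without one comes from
  \<open>\<int>/2\<close> and lies in the trivial component. So the right map is bijective away from the
  image of the top map, which it collapses to the trivial component: this is the pushout.\<close>

section \<open>Rotations\<close>

definition rotx :: "real \<Rightarrow> real \<Rightarrow> real^3^3" where
  "rotx c s = (\<chi> i j. if i = 1 \<and> j = 1 then 1 else if i = 2 \<and> j = 2 then c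
     else if i = 2 \<and> j = 3 then -s else if i = 3 \<and> j = 2 then s else if i = 3 \<and> j = 3 then c else 0)"

text \<open>For \<open>(p, q) = (cos \<theta>, sin \<theta>)\<close> this is the half-turn about the axis
  \<open>(0, cos (\<theta>/2), sin (\<theta>/2))\<close>.\<close>
definition halfturn_yz :: "real \<Rightarrow> real \<Rightarrow> real^3^3" where
  "halfturn_yz p q = (\<chi> i j. if i = 1 \<and> j = 1 then -1 else if i = 2 \<and> j = 2 then p
     else if i = 2 \<and> j = 3 then q else if i = 3 \<and> j = 2 then q else if i = 3 \<and> j = 3 then -p else 0)"

definition mconj :: "real^3^3 \<Rightarrow> real^3^3 \<Rightarrow> real^3^3" where
  "mconj Q X = transpose Q ** X ** Q"

lemmas mat3_defs = vec_eq_iff forall_3 matrix_matrix_mult_def sum_3 transpose_def mat_def det_3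
   matrix_vector_mult_def axis_def

lemma rotx_mult: "rotx c s ** rotx d t = rotx (c*d - s*t) (c*t + s*d)"
  by (simp add: mat3_defs rotx_def algebra_simps)

lemma rotx_1_0: "rotx 1 0 = mat 1"
  by (simp add: mat3_defs rotx_def)

lemma rotx_SO3: "c^2 + s^2 = 1 \<Longrightarrow> rotx c s \<in> SO3"
  by (simp add: SO3_def mat3_defs rotx_def power2_eq_square algebra_simps)

lemma SO3_iff_rotation_matrix: "A \<in> SO3 \<longleftrightarrow> rotation_matrix A"
  unfolding SO3_def rotation_matrix_def orthogonal_matrix_def
  using matrix_left_right_inverse by blast

lemma SO3_mult_transpose: "A \<in> SO3 \<Longrightarrow> A ** transpose A = mat 1"
  by (simp add: SO3_iff_rotation_matrix rotation_matrix_def orthogonal_matrix_def)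

lemma SO3_transpose_mult: "A \<in> SO3 \<Longrightarrow> transpose A ** A = mat 1"
  by (simp add: SO3_iff_rotation_matrix rotation_matrix_def orthogonal_matrix_def)

lemma SO3_mult: "A \<in> SO3 \<Longrightarrow> B \<in> SO3 \<Longrightarrow> A ** B \<in> SO3"
  by (simp add: SO3_iff_rotation_matrix rotation_matrix_def orthogonal_matrix_mul det_mul)

lemma SO3_transpose: "A \<in> SO3 \<Longrightarrow> transpose A \<in> SO3"
  by (simp add: SO3_iff_rotation_matrix rotation_matrix_def)

lemma mat1_SO3: "mat 1 \<in> SO3"
  by (simp add: SO3_def)

lemma mconj_SO3: "Q \<in> SO3 \<Longrightarrow> X \<in> SO3 \<Longrightarrow> mconj Q X \<in> SO3"
  by (simp add: mconj_def SO3_mult SO3_transpose)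

lemma mconj_mult: "Q \<in> SO3 \<Longrightarrow> mconj Q (X ** Y) = mconj Q X ** mconj Q Y"
proof -
  assume Q: "Q \<in> SO3"
  have "mconj Q X ** mconj Q Y = transpose Q ** X ** (Q ** transpose Q) ** Y ** Q"
    by (simp add: mconj_def matrix_mul_assoc)
  also have "\<dots> = mconj Q (X ** Y)" using SO3_mult_transpose[OF Q] by (simp add: mconj_def matrix_mul_assoc)
  finally show ?thesis by simp
qed

lemma mconj_mat1: "Q \<in> SO3 \<Longrightarrow> mconj Q (mat 1) = mat 1"
  by (simp add: mconj_def SO3_transpose_mult)

lemma mconj_mat1_left: "mconj (mat 1) X = X" by (simp add: mconj_def)

lemma mconj_inverse: "Q \<in> SO3 \<Longrightarrow> Q ** mconj Q X ** transpose Q = X"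
proof -
  assume Q: "Q \<in> SO3"
  have "Q ** mconj Q X ** transpose Q = (Q ** transpose Q) ** X ** (Q ** transpose Q)"
    by (simp add: mconj_def matrix_mul_assoc)
  thus ?thesis using SO3_mult_transpose[OF Q] by simp
qed

lemma mconj_comp: "mconj (Q ** R) X = mconj R (mconj Q X)"
  by (simp add: mconj_def matrix_transpose_mul matrix_mul_assoc)

lemma trace_mconj: "Q \<in> SO3 \<Longrightarrow> trace (mconj Q X) = trace X"
proof -
  assume Q: "Q \<in> SO3"
  have "trace (mconj Q X) = trace (transpose Q ** (X ** Q))"
    by (simp add: mconj_def matrix_mul_assoc)
  also have "\<dots> = trace ((X ** Q) ** transpose Q)" by (rule trace_mul_sym)
  also have "\<dots> = trace X" using SO3_mult_transpose[OF Q] by (simp add: matrix_mul_assoc[symmetric])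
  finally show ?thesis .
qed

lemma mconj_commute: "Q \<in> SO3 \<Longrightarrow> X ** Y = Y ** X \<Longrightarrow> mconj Q X ** mconj Q Y = mconj Q Y ** mconj Q X"
  by (simp add: mconj_mult[symmetric])

lemma matrix_mul_diff_ldistrib: "(A::'a::ring_1^'n^'m) ** (B - C) = A ** B - A ** C"
  by (simp add: matrix_matrix_mult_def vec_eq_iff sum_subtractf algebra_simps)

lemma transpose_diff: "transpose ((A::'a::ab_group_add^'n^'m) - B) = transpose A - transpose B"
  by (simp add: transpose_def vec_eq_iff)

lemma det_one_minus: "det (mat 1 - A) = - det (A - mat 1 :: real^3^3)"
  unfolding det_3 by (simp add: mat_def algebra_simps)

lemma SO3_fixed_unit_vector:
  assumes A: "A \<in> SO3" shows "\<exists>u. norm u = 1 \<and> A *v u = u"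
proof -
  \<comment> \<open>\<open>det (A - 1) = det (A\<^sup>T (A - 1)) = det (1 - A)\<close>, which in odd dimension forces \<open>det (A - 1) = 0\<close>\<close>
  have "transpose A ** (A - mat 1) = mat 1 - transpose A"
    using SO3_transpose_mult[OF A] by (simp add: matrix_mul_diff_ldistrib)
  also have "\<dots> = transpose (mat 1 - A)" by (simp add: transpose_diff)
  finally have e: "transpose A ** (A - mat 1) = transpose (mat 1 - A)" .
  have "det (transpose A ** (A - mat 1)) = det (A - mat 1)"
    using A by (simp add: det_mul SO3_def)
  hence "det (A - mat 1) = det (mat 1 - A)" unfolding e det_transpose by simp
  hence "det (A - mat 1) = 0" using det_one_minus[of A] by simp
  hence "\<not> invertible (A - mat 1)" by (simp add: invertible_det_nz)
  then obtain v where v: "v \<noteq> 0" "(A - mat 1) *v v = 0"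
    by (metis matrix_left_invertible_ker invertible_left_inverse)
  have Av: "A *v v = v" using v(2) by (simp add: matrix_vector_mult_diff_rdistrib)
  let ?u = "v /\<^sub>R norm v"
  have "A *v ?u = ?u" using Av by (simp add: matrix_vector_mult_scaleR)
  moreover have "norm ?u = 1" using v(1) by simp
  ultimately show ?thesis by blast
qed

lemma SO3_axis1_to_unit:
  fixes u :: "real^3" assumes "norm u = 1" shows "\<exists>R\<in>SO3. R *v axis 1 1 = u"
proof -
  obtain R where "rotation_matrix R" "R *v axis 1 1 = u"
    using rotation_matrix_exists_basis[of u 1] assms by auto
  thus ?thesis by (auto simp: SO3_iff_rotation_matrix)
qed

lemma SO3_orthonormal_entries: assumes "B \<in> SO3" shows
 "B$1$1^2 + B$2$1^2 + B$3$1^2 = 1"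
 "B$1$2^2 + B$2$2^2 + B$3$2^2 = 1"
 "B$1$3^2 + B$2$3^2 + B$3$3^2 = 1"
 "B$1$1*B$1$2 + B$2$1*B$2$2 + B$3$1*B$3$2 = 0"
 "B$1$1*B$1$3 + B$2$1*B$2$3 + B$3$1*B$3$3 = 0"
 "B$1$2*B$1$3 + B$2$2*B$2$3 + B$3$2*B$3$3 = 0"
 "B$1$1^2 + B$1$2^2 + B$1$3^2 = 1"
 "B$2$1^2 + B$2$2^2 + B$2$3^2 = 1"
 "B$3$1^2 + B$3$2^2 + B$3$3^2 = 1"
 "B$1$1*B$2$1 + B$1$2*B$2$2 + B$1$3*B$2$3 = 0"
 "B$1$1*B$3$1 + B$1$2*B$3$2 + B$1$3*B$3$3 = 0"
 "B$2$1*B$3$1 + B$2$2*B$3$2 + B$2$3*B$3$3 = 0"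
 "B$1$1 * B$2$2 * B$3$3 + B$1$2 * B$2$3 * B$3$1 + B$1$3 * B$2$1 * B$3$2 -
    B$1$1 * B$2$3 * B$3$2 - B$1$2 * B$2$1 * B$3$3 - B$1$3 * B$2$2 * B$3$1 = 1"
proof -
  have L: "transpose B ** B = mat 1" using SO3_transpose_mult[OF assms] .
  have R: "B ** transpose B = mat 1" using SO3_mult_transpose[OF assms] .
  have D: "det B = 1" using assms by (simp add: SO3_def)
  have "(transpose B ** B)$1$1 = 1" "(transpose B ** B)$2$2 = 1"
       "(transpose B ** B)$3$3 = 1" "(transpose B ** B)$1$2 = 0"
       "(transpose B ** B)$1$3 = 0" "(transpose B ** B)$2$3 = 0"
       "(B ** transpose B)$1$1 = 1" "(B ** transpose B)$2$2 = 1"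
       "(B ** transpose B)$3$3 = 1" "(B ** transpose B)$1$2 = 0"
       "(B ** transpose B)$1$3 = 0" "(B ** transpose B)$2$3 = 0"
    using L R by (simp_all add: mat_def)
  then show
 "B$1$1^2 + B$2$1^2 + B$3$1^2 = 1"
 "B$1$2^2 + B$2$2^2 + B$3$2^2 = 1"
 "B$1$3^2 + B$2$3^2 + B$3$3^2 = 1"
 "B$1$1*B$1$2 + B$2$1*B$2$2 + B$3$1*B$3$2 = 0"
 "B$1$1*B$1$3 + B$2$1*B$2$3 + B$3$1*B$3$3 = 0"
 "B$1$2*B$1$3 + B$2$2*B$2$3 + B$3$2*B$3$3 = 0"
 "B$1$1^2 + B$1$2^2 + B$1$3^2 = 1"
 "B$2$1^2 + B$2$2^2 + B$2$3^2 = 1"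
 "B$3$1^2 + B$3$2^2 + B$3$3^2 = 1"
 "B$1$1*B$2$1 + B$1$2*B$2$2 + B$1$3*B$2$3 = 0"
 "B$1$1*B$3$1 + B$1$2*B$3$2 + B$1$3*B$3$3 = 0"
 "B$2$1*B$3$1 + B$2$2*B$3$2 + B$2$3*B$3$3 = 0"
    by (simp_all add: matrix_matrix_mult_def sum_3 transpose_def mat_def power2_eq_square)
  show "B$1$1 * B$2$2 * B$3$3 + B$1$2 * B$2$3 * B$3$1 + B$1$3 * B$2$1 * B$3$2 -
    B$1$1 * B$2$3 * B$3$2 - B$1$2 * B$2$1 * B$3$3 - B$1$3 * B$2$2 * B$3$1 = 1"
    using D by (simp add: det_3)
qed

lemma orthonormal2_det_one: "(a::real)^2+b^2=1 \<Longrightarrow> c^2+d^2=1 \<Longrightarrow> a*c+b*d=0 \<Longrightarrow> a*d-c*b=1 \<Longrightarrow> d=a \<and> c=-b"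
proof -
  assume h: "a^2+b^2=1" "c^2+d^2=1" "a*c+b*d=0" "a*d-c*b=1"
  have "(a-d)^2+(b+c)^2 = (a^2+b^2)+(c^2+d^2) - 2*(a*d-c*b)"
    by (simp add: power2_eq_square algebra_simps)
  also have "\<dots> = 0" using h by simp
  finally have "a - d = 0 \<and> b + c = 0" by (simp only: sum_power2_eq_zero_iff)
  thus ?thesis by simp
qed

lemma orthonormal2_det_minus_one: "(a::real)^2+b^2=1 \<Longrightarrow> c^2+d^2=1 \<Longrightarrow> a*c+b*d=0 \<Longrightarrow> a*d-c*b=-1 \<Longrightarrow> d=-a \<and> c=b"
proof -
  assume h: "a^2+b^2=1" "c^2+d^2=1" "a*c+b*d=0" "a*d-c*b=-1"
  have "(a+d)^2+(b-c)^2 = (a^2+b^2)+(c^2+d^2) + 2*(a*d-c*b)"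
    by (simp add: power2_eq_square algebra_simps)
  also have "\<dots> = 0" using h by simp
  finally have "a + d = 0 \<and> b - c = 0" by (simp only: sum_power2_eq_zero_iff)
  thus ?thesis by simp
qed

lemma SO3_fixing_axis1_eq_rotx:
  assumes B: "B \<in> SO3" and f: "B *v axis 1 1 = axis 1 1"
  shows "\<exists>c s. c^2 + s^2 = 1 \<and> B = rotx c s"
proof -
  have "(B *v axis 1 1)$1 = axis 1 1 $ (1::3)" "(B *v axis 1 1)$2 = axis 1 1 $ (2::3)"
       "(B *v axis 1 1)$3 = axis 1 1 $ (3::3)" using f by simp_all
  hence c1: "B$1$1 = 1" "B$2$1 = 0" "B$3$1 = 0"
    by (simp_all add: matrix_vector_mult_def sum_3 axis_def)
  note e = SO3_orthonormal_entries[OF B]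
  have "B$1$2^2 + B$1$3^2 = 0" using e(7) c1 by simp
  hence "B$1$2 = 0 \<and> B$1$3 = 0" by (simp only: sum_power2_eq_zero_iff)
  hence z: "B$1$2 = 0" "B$1$3 = 0" by simp_all
  have h1: "(B$2$2)^2 + (B$3$2)^2 = 1" using e(2) z by simp
  have h2: "(B$2$3)^2 + (B$3$3)^2 = 1" using e(3) z by simp
  have h3: "B$2$2 * B$2$3 + B$3$2 * B$3$3 = 0" using e(6) z by simp
  have h4: "B$2$2 * B$3$3 - B$2$3 * B$3$2 = 1" using e(13) z c1 by simp
  have "B$3$3 = B$2$2 \<and> B$2$3 = - B$3$2"
    by (rule orthonormal2_det_one[OF h1 h2 h3 h4])
  hence "B = rotx (B$2$2) (B$3$2)"
    using c1 z by (simp add: vec_eq_iff forall_3 rotx_def)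
  moreover have "(B$2$2)^2 + (B$3$2)^2 = 1" using e(2) z by simp
  ultimately show ?thesis by blast
qed

lemma SO3_conj_rotx:
  assumes A: "A \<in> SO3"
  obtains R c s where "R \<in> SO3" "c^2 + s^2 = 1" "mconj R A = rotx c s"
proof -
  obtain u where u: "norm u = 1" "A *v u = u" using SO3_fixed_unit_vector[OF A] by blast
  obtain R where R: "R \<in> SO3" "R *v axis 1 1 = u" using SO3_axis1_to_unit[OF u(1)] by blast
  have "mconj R A *v axis 1 1 = transpose R *v (A *v (R *v axis 1 1))"
    by (simp add: mconj_def matrix_vector_mul_assoc matrix_mul_assoc)
  also have "\<dots> = transpose R *v (R *v axis 1 1)" using u R by (simp del: transpose_matrix_vector)
  also have "\<dots> = (transpose R ** R) *v axis 1 1" by (simp only: matrix_vector_mul_assoc)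
  also have "\<dots> = axis 1 1" using SO3_transpose_mult[OF R(1)] by simp
  finally obtain c s where "c^2 + s^2 = 1" "mconj R A = rotx c s"
    using SO3_fixing_axis1_eq_rotx mconj_SO3[OF R(1) A] by blast
  with R(1) that show ?thesis by blast
qed

lemma rot2_fixed_vector_zero: "(c-1)*x + s*y = 0 \<Longrightarrow> -s*x + (c-1)*y = 0 \<Longrightarrow> \<not>(c=1 \<and> s=0) \<Longrightarrow> x = 0 \<and> (y::real) = 0"
proof -
  assume h: "(c-1)*x + s*y = 0" "-s*x + (c-1)*y = 0" "\<not>(c=1 \<and> s=0)"
  have pos: "(c-1)^2 + s^2 \<noteq> 0"
  proof
    assume "(c-1)^2 + s^2 = 0"
    hence "c - 1 = 0 \<and> s = 0" by (simp only: sum_power2_eq_zero_iff)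
    thus False using h(3) by simp
  qed
  have "((c-1)^2 + s^2) * x = (c-1)*((c-1)*x + s*y) - s*(-s*x + (c-1)*y)"
    by (simp add: power2_eq_square algebra_simps)
  hence "((c-1)^2 + s^2) * x = 0" using h by simp
  hence "x = 0" using pos by auto
  moreover have "((c-1)^2 + s^2) * y = s*((c-1)*x + s*y) + (c-1)*(-s*x + (c-1)*y)"
    by (simp add: power2_eq_square algebra_simps)
  hence "((c-1)^2 + s^2) * y = 0" using h by simp
  hence "y = 0" using pos by auto
  ultimately show ?thesis by simp
qed

lemma commute_rotx_axis:
  assumes cs: "\<not> (c = 1 \<and> s = 0)" and cm: "C ** rotx c s = rotx c s ** C"
  shows "C$1$2 = 0" "C$1$3 = 0" "C$2$1 = 0" "C$3$1 = 0"
proof -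
  have E: "(C ** rotx c s)$1$2 = (rotx c s ** C)$1$2" "(C ** rotx c s)$1$3 = (rotx c s ** C)$1$3"
     "(C ** rotx c s)$2$1 = (rotx c s ** C)$2$1" "(C ** rotx c s)$3$1 = (rotx c s ** C)$3$1"
    using cm by simp_all
  have e1: "(c-1)*C$1$2 + s*C$1$3 = 0" using E(1) by (simp add: matrix_matrix_mult_def sum_3 rotx_def algebra_simps)
  have e2: "-s*C$1$2 + (c-1)*C$1$3 = 0" using E(2) by (simp add: matrix_matrix_mult_def sum_3 rotx_def algebra_simps)
  have e3: "(c-1)*C$2$1 + (-s)*C$3$1 = 0" using E(3) by (simp add: matrix_matrix_mult_def sum_3 rotx_def algebra_simps)
  have e4: "-(-s)*C$2$1 + (c-1)*C$3$1 = 0" using E(4) by (simp add: matrix_matrix_mult_def sum_3 rotx_def algebra_simps)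
  have "C$1$2 = 0 \<and> C$1$3 = 0" by (rule rot2_fixed_vector_zero[OF e1 e2 cs])
  moreover have "\<not>(c=1 \<and> -s=0)" using cs by simp
  then have "C$2$1 = 0 \<and> C$3$1 = 0" by (rule rot2_fixed_vector_zero[OF e3 e4])
  ultimately show "C$1$2 = 0" "C$1$3 = 0" "C$2$1 = 0" "C$3$1 = 0" by simp_all
qed

lemma commute_rotx:
  assumes C: "C \<in> SO3" and cs: "c^2+s^2=1" "\<not>(c=1 \<and> s=0)" and cm: "C ** rotx c s = rotx c s ** C"
  shows "(\<exists>d t. d^2+t^2=1 \<and> C = rotx d t) \<or> (c = -1 \<and> s = 0 \<and> (\<exists>p q. p^2+q^2=1 \<and> C = halfturn_yz p q))"
proof -
  have z1: "C$1$2 = 0" "C$1$3 = 0" and z2: "C$2$1 = 0" "C$3$1 = 0"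
    using commute_rotx_axis[OF cs(2) cm] by simp_all
  have E: "(C ** rotx c s)$2$2 = (rotx c s ** C)$2$2" "(C ** rotx c s)$2$3 = (rotx c s ** C)$2$3"
    using cm by simp_all
  have e5: "s*C$2$3 = - s*C$3$2" using E(1) by (simp add: matrix_matrix_mult_def sum_3 rotx_def algebra_simps)
  have e6: "s*C$2$2 = s*C$3$3" using E(2) by (simp add: matrix_matrix_mult_def sum_3 rotx_def algebra_simps) metis
  note e = SO3_orthonormal_entries[OF C]
  have "C$1$1^2 = 1" using e(7) z1 by simp
  hence "C$1$1 = 1 \<or> C$1$1 = -1" by (simp add: power2_eq_1_iff)
  have h1: "(C$2$2)^2 + (C$3$2)^2 = 1" using e(2) z1 by simp
  have h2: "(C$2$3)^2 + (C$3$3)^2 = 1" using e(3) z1 by simp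
  have h3: "C$2$2 * C$2$3 + C$3$2 * C$3$3 = 0" using e(6) z1 by simp
  have h4: "C$1$1 * (C$2$2 * C$3$3 - C$2$3 * C$3$2) = 1" using e(13) z1 z2 by (simp add: algebra_simps)
  show ?thesis
  proof (cases "C$1$1 = 1")
    case True
    hence "C$2$2 * C$3$3 - C$2$3 * C$3$2 = 1" using h4 by simp
    hence "C$3$3 = C$2$2 \<and> C$2$3 = - C$3$2" by (rule orthonormal2_det_one[OF h1 h2 h3])
    hence "C = rotx (C$2$2) (C$3$2)" using True z1 z2 by (simp add: vec_eq_iff forall_3 rotx_def)
    thus ?thesis using h1 by blast
  next
    case False
    hence m: "C$1$1 = -1" using \<open>C$1$1 = 1 \<or> C$1$1 = -1\<close> by simp
    hence "C$2$2 * C$3$3 - C$2$3 * C$3$2 = -1" using h4 by simp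
    hence r: "C$3$3 = - C$2$2 \<and> C$2$3 = C$3$2" by (rule orthonormal2_det_minus_one[OF h1 h2 h3])
    have s1: "s*C$3$2 = 0" using e5 r by simp
    have s2: "s*C$2$2 = 0" using e6 r by simp
    have "s^2 = (s*C$2$2)^2 + (s*C$3$2)^2"
      using h1 by (simp add: power_mult_distrib algebra_simps flip: distrib_left)
    hence s0: "s = 0" using s1 s2 by simp
    hence "c^2 = 1" using cs(1) by simp
    hence "c = -1" using cs(2) s0 by (simp add: power2_eq_1_iff)
    moreover have "C = halfturn_yz (C$2$2) (C$3$2)" using m r z1 z2 by (simp add: vec_eq_iff forall_3 halfturn_yz_def)
    ultimately show ?thesis using s0 h1 by blast
  qed
qed

section \<open>Simultaneous normal form of commuting rotations\<close>

lemma sgnbit_simps[simp]: "sgnbit 0 = 1" "sgnbit 1 = -1" by (simp_all add: sgnbit_def)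

lemma Qbar_emb_01: "Qbar_emb (0,1) = rotx (-1) 0"
  by (simp add: Qbar_emb_def rotx_def vec_eq_iff forall_3)

lemma Qbar_emb_00: "Qbar_emb (0,0) = mat 1"
  by (simp add: Qbar_emb_def mat_def vec_eq_iff forall_3)

lemma half_angle_unit_vector: "p^2+q^2=1 \<Longrightarrow> \<exists>a b::real. a^2+b^2=1 \<and> p*a+q*b=a \<and> q*a-p*b=b"
proof -
  assume h: "p^2+q^2=1"
  show ?thesis
  proof (cases "p = -1")
    case True
    hence "q = 0" using h by simp
    thus ?thesis using True by (intro exI[of _ 0] exI[of _ 1]) simp
  next
    case False
    have "p \<ge> -1"
    proof (rule ccontr)
      assume "\<not> p \<ge> -1" hence "p^2 > 1" by (smt (verit) one_less_power pos2 power2_minus)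
      thus False using h by (smt (verit) zero_le_power2)
    qed
    hence pos: "2 + 2*p > 0" using False by simp
    define N where "N = sqrt (2 + 2*p)"
    have N: "N > 0" "N^2 = 2 + 2*p" using pos by (simp_all add: N_def)
    have "((1+p)/N)^2 + (q/N)^2 = ((1+p)^2 + q^2) / N^2" by (metis add_divide_distrib power_divide)
    also have "(1+p)^2 + q^2 = 2 + 2*p" using h by (simp add: power2_eq_square algebra_simps)
    finally have a1: "((1+p)/N)^2 + (q/N)^2 = 1" using N pos by simp
    have a2: "p*((1+p)/N) + q*(q/N) = (1+p)/N"
    proof -
      have "p*((1+p)/N) + q*(q/N) = (p + (p^2 + q^2))/N" by (simp add: power2_eq_square add_divide_distrib algebra_simps)
      thus ?thesis using h by (simp add: add.commute)
    qed
    have a3: "q*((1+p)/N) - p*(q/N) = q/N" by (simp add: algebra_simps diff_divide_distrib add_divide_distrib)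
    show ?thesis using a1 a2 a3 by blast
  qed
qed

lemma halfturn_yz_conj_Qbar:
  assumes "p^2+q^2=1"
  shows "\<exists>a b. a^2+b^2=1 \<and> mconj (rotx a b) (halfturn_yz p q) = Qbar_emb (1,0) \<and> mconj (rotx a b) (rotx (-1) 0) = rotx (-1) 0"
proof -
  obtain a b where ab: "a^2+b^2=1" "p*a+q*b=a" "q*a-p*b=b" using half_angle_unit_vector[OF assms] by blast
  have eq: "halfturn_yz p q ** rotx a b = rotx a b ** Qbar_emb (1,0)"
    using ab by (simp add: vec_eq_iff forall_3 matrix_matrix_mult_def sum_3 rotx_def halfturn_yz_def Qbar_emb_def algebra_simps)
  have "mconj (rotx a b) (halfturn_yz p q) = transpose (rotx a b) ** (halfturn_yz p q ** rotx a b)"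
    by (simp add: mconj_def matrix_mul_assoc)
  also have "\<dots> = (transpose (rotx a b) ** rotx a b) ** Qbar_emb (1,0)"
    unfolding eq by (simp add: matrix_mul_assoc)
  also have "\<dots> = Qbar_emb (1,0)" using SO3_transpose_mult[OF rotx_SO3[OF ab(1)]] by simp
  finally have 1: "mconj (rotx a b) (halfturn_yz p q) = Qbar_emb (1,0)" .
  have eq2: "rotx (-1) 0 ** rotx a b = rotx a b ** rotx (-1) 0" by (simp add: rotx_mult)
  have "mconj (rotx a b) (rotx (-1) 0) = transpose (rotx a b) ** (rotx (-1) 0 ** rotx a b)"
    by (simp add: mconj_def matrix_mul_assoc)
  also have "\<dots> = (transpose (rotx a b) ** rotx a b) ** rotx (-1) 0"
    unfolding eq2 by (simp add: matrix_mul_assoc)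
  also have "\<dots> = rotx (-1) 0" using SO3_transpose_mult[OF rotx_SO3[OF ab(1)]] by simp
  finally show ?thesis using 1 ab(1) by blast
qed

lemma commute_Qbar_gens:
  assumes C: "C \<in> SO3" and c1: "C ** Qbar_emb (1,0) = Qbar_emb (1,0) ** C"
    and c2: "C ** Qbar_emb (0,1) = Qbar_emb (0,1) ** C"
  shows "\<exists>p. C = Qbar_emb p"
proof -
  have E: "(C ** Qbar_emb (1,0))$1$2 = (Qbar_emb (1,0) ** C)$1$2"
     "(C ** Qbar_emb (1,0))$2$1 = (Qbar_emb (1,0) ** C)$2$1"
     "(C ** Qbar_emb (1,0))$2$3 = (Qbar_emb (1,0) ** C)$2$3"
     "(C ** Qbar_emb (1,0))$3$2 = (Qbar_emb (1,0) ** C)$3$2"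
     "(C ** Qbar_emb (0,1))$1$3 = (Qbar_emb (0,1) ** C)$1$3"
     "(C ** Qbar_emb (0,1))$3$1 = (Qbar_emb (0,1) ** C)$3$1"
    using c1 c2 by simp_all
  hence z: "C$1$2 = 0" "C$2$1 = 0" "C$2$3 = 0" "C$3$2 = 0" "C$1$3 = 0" "C$3$1 = 0"
    by (simp_all add: matrix_matrix_mult_def sum_3 Qbar_emb_def)
  note e = SO3_orthonormal_entries[OF C]
  have d1: "C$1$1 = 1 \<or> C$1$1 = -1" using e(7) z by (simp add: power2_eq_1_iff)
  have d2: "C$2$2 = 1 \<or> C$2$2 = -1" using e(8) z by (simp add: power2_eq_1_iff)
  have d: "C$1$1 * C$2$2 * C$3$3 = 1" using e(13) z by simp
  define p where "p = ((if C$1$1 = 1 then 0 else 1) :: bit, (if C$2$2 = 1 then 0 else 1) :: bit)"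
  have "C = Qbar_emb p"
    using d1 d2 d z unfolding p_def
    by (auto simp: vec_eq_iff forall_3 Qbar_emb_def)
  thus ?thesis by blast
qed

lemma commuting_halfturns_conj_Qbar:
  assumes S: "\<forall>i\<in>I. x i \<in> SO3" and C: "\<forall>i\<in>I. \<forall>j\<in>I. x i ** x j = x j ** x i"
    and k: "k \<in> I" "x k = rotx (-1) 0" and j: "j \<in> I" "x j = halfturn_yz p q" and pq: "p^2+q^2=1"
  shows "\<exists>Q\<in>SO3. \<forall>i\<in>I. \<exists>p. mconj Q (x i) = Qbar_emb p"
proof -
  obtain a b where ab: "a^2+b^2=1" "mconj (rotx a b) (halfturn_yz p q) = Qbar_emb (1,0)"
      "mconj (rotx a b) (rotx (-1) 0) = rotx (-1) 0"
    using halfturn_yz_conj_Qbar[OF pq] by blast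
  define Q where "Q = rotx a b"
  have QS: "Q \<in> SO3" unfolding Q_def by (rule rotx_SO3[OF ab(1)])
  have zk: "mconj Q (x k) = Qbar_emb (0,1)" using k(2) ab(3) by (simp add: Q_def Qbar_emb_01)
  have zj: "mconj Q (x j) = Qbar_emb (1,0)" using j(2) ab(2) by (simp add: Q_def)
  have "\<exists>p. mconj Q (x i) = Qbar_emb p" if i: "i \<in> I" for i
  proof (rule commute_Qbar_gens)
    show "mconj Q (x i) \<in> SO3" using QS S i by (simp add: mconj_SO3)
    show "mconj Q (x i) ** Qbar_emb (1,0) = Qbar_emb (1,0) ** mconj Q (x i)"
      using mconj_commute[OF QS C[rule_format, OF i j(1)]] zj by simp
    show "mconj Q (x i) ** Qbar_emb (0,1) = Qbar_emb (0,1) ** mconj Q (x i)"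
      using mconj_commute[OF QS C[rule_format, OF i k(1)]] zk by simp
  qed
  then show ?thesis using QS by blast
qed

lemma commuting_SO3_conj_torus_or_Qbar:
  assumes S: "\<forall>i\<in>I. x i \<in> SO3" and C: "\<forall>i\<in>I. \<forall>j\<in>I. x i ** x j = x j ** x i"
  shows "\<exists>Q\<in>SO3. (\<forall>i\<in>I. \<exists>c s. c^2+s^2=1 \<and> mconj Q (x i) = rotx c s) \<or> (\<forall>i\<in>I. \<exists>p. mconj Q (x i) = Qbar_emb p)"
proof (cases "\<forall>i\<in>I. x i = mat 1")
  case True
  then have "\<forall>i\<in>I. mconj (mat 1) (x i) = rotx 1 0" by (simp add: mconj_mat1_left rotx_1_0)
  then show ?thesis using mat1_SO3 by force
next
  case False
  then obtain k where k: "k \<in> I" "x k \<noteq> mat 1" by blast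
  obtain R c s where R: "R \<in> SO3" and cs: "c^2+s^2=1" "mconj R (x k) = rotx c s"
    using SO3_conj_rotx S k(1) by blast
  define y where "y i = mconj R (x i)" for i
  have yS: "\<forall>i\<in>I. y i \<in> SO3" using S R by (simp add: y_def mconj_SO3)
  have yC: "\<forall>i\<in>I. \<forall>j\<in>I. y i ** y j = y j ** y i" using C R by (simp add: y_def mconj_commute)
  have yk: "y k = rotx c s" unfolding y_def by (rule cs(2))
  have ncs: "\<not>(c=1 \<and> s=0)"
  proof
    assume "c=1 \<and> s=0"
    hence "y k = mat 1" using yk rotx_1_0 by simp
    hence "x k = R ** mat 1 ** transpose R" using mconj_inverse[OF R, of "x k"] by (simp add: y_def)
    thus False using k(2) SO3_mult_transpose[OF R] by simp
  qed
  have cb: "(\<exists>d t. d^2+t^2=1 \<and> y i = rotx d t) \<or> (c = -1 \<and> s = 0 \<and> (\<exists>p q. p^2+q^2=1 \<and> y i = halfturn_yz p q))"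
    if "i \<in> I" for i
  proof (rule commute_rotx[OF _ cs(1) ncs])
    show "y i \<in> SO3" using yS that by blast
    show "y i ** rotx c s = rotx c s ** y i" using yC that k(1) unfolding yk[symmetric] by blast
  qed
  show ?thesis
  proof (cases "\<forall>i\<in>I. \<exists>d t. d^2+t^2=1 \<and> y i = rotx d t")
    case True
    thus ?thesis using R unfolding y_def by blast
  next
    case False
    then obtain j where j: "j \<in> I" "\<not>(\<exists>d t. d^2+t^2=1 \<and> y j = rotx d t)" by blast
    then obtain p q where pq: "c = -1" "s = 0" "p^2+q^2=1" "y j = halfturn_yz p q" using cb by blast
    obtain Q where Q: "Q \<in> SO3" "\<forall>i\<in>I. \<exists>p. mconj Q (y i) = Qbar_emb p"
      using commuting_halfturns_conj_Qbar[OF yS yC k(1) _ j(1) pq(4) pq(3)] yk pq(1,2) by auto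
    have "mconj (R ** Q) (x i) = mconj Q (y i)" for i by (simp add: y_def mconj_comp)
    then have "\<forall>i\<in>I. \<exists>p. mconj (R ** Q) (x i) = Qbar_emb p" using Q(2) by simp
    moreover have "R ** Q \<in> SO3" using R Q(1) by (rule SO3_mult)
    ultimately show ?thesis by blast
  qed
qed

section \<open>A continuous invariant of commuting pairs\<close>

definition pair_trace :: "real^3^3 \<Rightarrow> real^3^3 \<Rightarrow> real" where
  "pair_trace A B = trace A + trace B + trace (A ** B)"

definition generates_V4 :: "bit \<times> bit \<Rightarrow> bit \<times> bit \<Rightarrow> bool" where
  "generates_V4 p q \<longleftrightarrow> p \<noteq> (0,0) \<and> q \<noteq> (0,0) \<and> p \<noteq> q"

lemma pair_trace_mconj: "Q \<in> SO3 \<Longrightarrow> pair_trace (mconj Q A) (mconj Q B) = pair_trace A B"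
  by (simp add: pair_trace_def trace_mconj flip: mconj_mult)

lemma trace_rotx: "trace (rotx c s) = 1 + 2*c"
  by (simp add: trace_def sum_3 rotx_def)

lemma pair_trace_rotx_nonneg: "c^2+s^2=1 \<Longrightarrow> d^2+t^2=1 \<Longrightarrow> pair_trace (rotx c s) (rotx d t) \<ge> 0"
proof -
  assume h: "c^2+s^2=1" "d^2+t^2=1"
  have "pair_trace (rotx c s) (rotx d t) = 3 + 2*c + 2*d + 2*(c*d - s*t)"
    by (simp add: pair_trace_def rotx_mult trace_rotx)
  also have "\<dots> = (c+d+1)^2 + (s-t)^2 + (1 - (c^2+s^2)) + (1 - (d^2+t^2))"
    by (simp add: power2_eq_square algebra_simps)
  also have "\<dots> = (c+d+1)^2 + (s-t)^2" using h by simp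
  finally show ?thesis by simp
qed

lemma bit_cases: "(b::bit) = 0 \<or> b = 1" by (metis bit_not_zero_iff)

lemma bitpair_cases: obtains "p = (0,0)" | "p = (0,1)" | "p = (1,0)" | "p = ((1::bit),(1::bit))"
  by (metis bit_cases prod.collapse)

lemma pair_trace_Qbar_neg_iff: "pair_trace (Qbar_emb p) (Qbar_emb q) < 0 \<longleftrightarrow> generates_V4 p q"
  by (cases p rule: bitpair_cases; cases q rule: bitpair_cases;
      simp add: pair_trace_def generates_V4_def trace_def sum_3 Qbar_emb_def matrix_matrix_mult_def)

lemma pair_trace_Qbar_dichotomy: "pair_trace (Qbar_emb p) (Qbar_emb q) = -3 \<or> pair_trace (Qbar_emb p) (Qbar_emb q) \<ge> 0"
  by (cases p rule: bitpair_cases; cases q rule: bitpair_cases;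
      simp add: pair_trace_def generates_V4_def trace_def sum_3 Qbar_emb_def matrix_matrix_mult_def)

lemma pair_trace_commuting_dichotomy:
  assumes A: "A \<in> SO3" and B: "B \<in> SO3" and AB: "A ** B = B ** A"
  shows "pair_trace A B = -3 \<or> pair_trace A B \<ge> 0"
proof -
  define x where "x b = (if b then A else B)" for b :: bool
  have "\<forall>i\<in>UNIV. x i \<in> SO3" using A B by (simp add: x_def)
  moreover have "\<forall>i\<in>UNIV. \<forall>j\<in>UNIV. x i ** x j = x j ** x i" using AB by (simp add: x_def)
  ultimately obtain Q where Q: "Q \<in> SO3"
    and D: "(\<forall>i\<in>UNIV. \<exists>c s. c^2+s^2=1 \<and> mconj Q (x i) = rotx c s) \<or> (\<forall>i\<in>UNIV. \<exists>p. mconj Q (x i) = Qbar_emb p)"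
    using commuting_SO3_conj_torus_or_Qbar[of UNIV x] by blast
  have g: "pair_trace A B = pair_trace (mconj Q (x True)) (mconj Q (x False))" using pair_trace_mconj[OF Q] by (simp add: x_def)
  from D show ?thesis
  proof
    assume H: "\<forall>i\<in>UNIV. \<exists>c s. c^2+s^2=1 \<and> mconj Q (x i) = rotx c s"
    obtain c s where "c^2+s^2=1" "mconj Q (x True) = rotx c s" using bspec[OF H UNIV_I, of True] by blast
    moreover obtain d t where "d^2+t^2=1" "mconj Q (x False) = rotx d t" using bspec[OF H UNIV_I, of False] by blast
    ultimately
    show ?thesis using g pair_trace_rotx_nonneg by simp
  next
    assume H: "\<forall>i\<in>UNIV. \<exists>p. mconj Q (x i) = Qbar_emb p"
    obtain p where "mconj Q (x True) = Qbar_emb p" using bspec[OF H UNIV_I, of True] by blast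
    moreover obtain q where "mconj Q (x False) = Qbar_emb q" using bspec[OF H UNIV_I, of False] by blast
    ultimately
    show ?thesis using g pair_trace_Qbar_dichotomy by simp
  qed
qed

section \<open>Path components of \<open>Hom(\<int>\<^sup>n, SO(3))\<close>\<close>

lemma topspace_HomSO3_top: "topspace (HomSO3_top n) = HomSO3 n"
  unfolding HomSO3_top_def by (auto simp: HomSO3_def)

lemma pathin_HomSO3_top: "pathin (HomSO3_top n) g \<longleftrightarrow>
   (\<forall>t\<in>{0..1}. g t \<in> HomSO3 n) \<and> (\<forall>i<n. continuous_on {0..1} (\<lambda>t. g t i))"
proof -
  have ext: "HomSO3 n \<subseteq> extensional {..<n}" by (auto simp: HomSO3_def PiE_def)
  show ?thesis
    unfolding pathin_def HomSO3_top_def continuous_map_in_subtopology continuous_map_componentwise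
    using ext by (auto simp: Pi_iff)
qed

lemma continuous_on_matrix_mult: "continuous_on S A \<Longrightarrow> continuous_on S B \<Longrightarrow> continuous_on S (\<lambda>t. A t ** B t :: real^'n^'m)"
  unfolding matrix_matrix_mult_def
  by (intro continuous_on_vec_lambda continuous_on_sum continuous_on_mult continuous_on_component)

lemma continuous_on_transpose: "continuous_on S A \<Longrightarrow> continuous_on S (\<lambda>t. transpose (A t :: real^'n^'m))"
  unfolding transpose_def
  by (intro continuous_on_vec_lambda continuous_on_component)

lemma continuous_on_trace: "continuous_on S A \<Longrightarrow> continuous_on S (\<lambda>t. trace (A t :: real^'n^'n))"
  unfolding trace_def
  by (intro continuous_on_sum continuous_on_component)

lemma continuous_on_mconj: "continuous_on S P \<Longrightarrow> continuous_on S (\<lambda>t. mconj (P t) X)"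
  unfolding mconj_def by (intro continuous_on_matrix_mult continuous_on_transpose continuous_on_const)

lemma continuous_on_pair_trace: "continuous_on S A \<Longrightarrow> continuous_on S B \<Longrightarrow> continuous_on S (\<lambda>t. pair_trace (A t) (B t))"
  unfolding pair_trace_def by (intro continuous_on_add continuous_on_trace continuous_on_matrix_mult)

lemma continuous_on_rotx:
  "continuous_on S c \<Longrightarrow> continuous_on S s \<Longrightarrow> continuous_on S (\<lambda>t. rotx (c t) (s t))"
  unfolding rotx_def
proof (intro continuous_on_vec_lambda)
  fix i j :: 3
  assume "continuous_on S c" "continuous_on S s"
  then show "continuous_on S (\<lambda>t. if i = 1 \<and> j = 1 then 1 else if i = 2 \<and> j = 2 then c t
     else if i = 2 \<and> j = 3 then - s t else if i = 3 \<and> j = 2 then s t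
     else if i = 3 \<and> j = 3 then c t else 0)"
    using exhaust_3[of i] exhaust_3[of j] by (elim disjE) (simp_all add: continuous_on_minus)
qed

lemma pair_trace_sign_path_invariant:
  assumes p: "path_component_of (HomSO3_top n) a b" and i: "i < n" and j: "j < n"
  shows "pair_trace (a i) (a j) < 0 \<longleftrightarrow> pair_trace (b i) (b j) < 0"
proof -
  \<comment> \<open>along a path the invariant never takes the value \<open>-1\<close>, so by the IVT its sign is constant\<close>
  obtain g where g: "pathin (HomSO3_top n) g" "g 0 = a" "g 1 = b"
    using p unfolding path_component_of_def by blast
  define f where "f t = pair_trace (g t i) (g t j)" for t
  have cf: "continuous_on {0..1} f" unfolding f_def
    using g(1) i j unfolding pathin_HomSO3_top by (intro continuous_on_pair_trace) auto
  have dich: "f t = -3 \<or> f t \<ge> 0" if "t \<in> {0..1}" for t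
  proof -
    have "g t \<in> HomSO3 n" using g(1) that unfolding pathin_HomSO3_top by blast
    hence "g t i \<in> SO3" "g t j \<in> SO3" "g t i ** g t j = g t j ** g t i"
      using i j by (auto simp: HomSO3_def PiE_iff)
    thus ?thesis unfolding f_def by (rule pair_trace_commuting_dichotomy)
  qed
  have "f 0 < 0 \<longleftrightarrow> f 1 < 0"
  proof
    assume "f 0 < 0"
    show "f 1 < 0"
    proof (rule ccontr)
      assume "\<not> f 1 < 0"
      hence "f 0 \<le> -1" "-1 \<le> f 1" using dich[of 0] \<open>f 0 < 0\<close> by auto
      then obtain t where "0 \<le> t" "t \<le> 1" "f t = -1" using IVT'[of f 0 "-1" 1] cf by auto
      thus False using dich[of t] by auto
    qed
  next
    assume "f 1 < 0"
    show "f 0 < 0"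
    proof (rule ccontr)
      assume "\<not> f 0 < 0"
      hence "f 1 \<le> -1" "-1 \<le> f 0" using dich[of 1] \<open>f 1 < 0\<close> by auto
      then obtain t where "0 \<le> t" "t \<le> 1" "f t = -1" using IVT2'[of f 1 "-1" 0] cf by auto
      thus False using dich[of t] by auto
    qed
  qed
  thus ?thesis using g by (simp add: f_def)
qed

lemma SO3_path_from_identity:
  assumes Q: "Q \<in> SO3"
  shows "\<exists>P::real \<Rightarrow> real^3^3. continuous_on {0..1} P \<and> (\<forall>t. P t \<in> SO3) \<and> P 0 = mat 1 \<and> P 1 = Q"
proof -
  obtain R c s where R: "R \<in> SO3" and cs: "c^2+s^2=1" "mconj R Q = rotx c s"
    using SO3_conj_rotx[OF Q] by blast
  obtain th where th: "c = cos th" "s = sin th" using sincos_total_2pi[OF cs(1)] by blast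
  have RT: "transpose R \<in> SO3" using R by (rule SO3_transpose)
  define P where "P t = mconj (transpose R) (rotx (cos (t*th)) (sin (t*th)))" for t
  have "continuous_on {0..1} P" unfolding P_def mconj_def
    by (intro continuous_on_matrix_mult continuous_on_transpose continuous_on_rotx continuous_intros)
  moreover have "\<forall>t. P t \<in> SO3" unfolding P_def by (intro allI mconj_SO3 RT rotx_SO3) simp
  moreover have "P 0 = mat 1" unfolding P_def using rotx_1_0 mconj_mat1[OF RT] by simp
  moreover have "P 1 = Q"
  proof -
    have "P 1 = R ** mconj R Q ** transpose R" using cs th by (simp add: P_def mconj_def)
    thus ?thesis using mconj_inverse[OF R] by simp
  qed
  ultimately show ?thesis by blast
qed

lemma path_component_mconj_tuple:
  assumes x: "x \<in> HomSO3 n" and Q: "Q \<in> SO3"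
  shows "path_component_of (HomSO3_top n) x (restrict (\<lambda>i. mconj Q (x i)) {..<n})"
proof -
  obtain P :: "real \<Rightarrow> real^3^3" where P: "continuous_on {0..1} P" "\<forall>t. P t \<in> SO3" "P 0 = mat 1" "P 1 = Q"
    using SO3_path_from_identity[OF Q] by blast
  define g where "g t = restrict (\<lambda>i. mconj (P t) (x i)) {..<n}" for t :: real
  have "pathin (HomSO3_top n) g"
    unfolding pathin_HomSO3_top
  proof (intro conjI ballI allI impI)
    fix t :: real
    show "g t \<in> HomSO3 n" using x P(2)
      by (auto simp: g_def HomSO3_def PiE_iff mconj_SO3 mconj_commute)
  next
    fix i assume "i < n"
    thus "continuous_on {0..1} (\<lambda>t. g t i)" unfolding g_def using P(1) by (simp add: continuous_on_mconj)
  qed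
  moreover have "g 0 = x" using x by (auto simp: g_def mconj_mat1_left P(3) HomSO3_def PiE_iff restrict_def extensional_def)
  moreover have "g 1 = restrict (\<lambda>i. mconj Q (x i)) {..<n}" by (simp add: g_def P(4))
  ultimately show ?thesis unfolding path_component_of_def by blast
qed

lemma path_component_rotx_tuple:
  shows "path_component_of (HomSO3_top n) (restrict (\<lambda>_. mat 1) {..<n})
           (restrict (\<lambda>i. rotx (cos (th i)) (sin (th i))) {..<n})"
proof -
  define g where "g t = restrict (\<lambda>i. rotx (cos (t * th i)) (sin (t * th i))) {..<n}" for t :: real
  have "pathin (HomSO3_top n) g"
    unfolding pathin_HomSO3_top
  proof (intro conjI ballI allI impI)
    fix t :: real
    show "g t \<in> HomSO3 n"
      by (auto simp: g_def HomSO3_def PiE_iff rotx_SO3 rotx_mult algebra_simps)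
  next
    fix i assume "i < n"
    thus "continuous_on {0..1} (\<lambda>t. g t i)" unfolding g_def
      by (simp add: continuous_on_rotx continuous_intros)
  qed
  moreover have "g 0 = restrict (\<lambda>_. mat 1) {..<n}" by (simp add: g_def rotx_1_0)
  moreover have "g 1 = restrict (\<lambda>i. rotx (cos (th i)) (sin (th i))) {..<n}" by (simp add: g_def)
  ultimately show ?thesis unfolding path_component_of_def by blast
qed

lemma Qbar_relabel_by_mconj:
  assumes "v1 \<noteq> (0,0)" "v2 \<noteq> (0,0)" "v3 \<noteq> (0,0)" "v1 \<noteq> v2" "v1 \<noteq> v3" "v2 \<noteq> v3"
  shows "\<exists>Q\<in>SO3. Qbar_emb v1 = mconj Q (Qbar_emb (1,0)) \<and> Qbar_emb v2 = mconj Q (Qbar_emb (0,1))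
    \<and> Qbar_emb v3 = mconj Q (Qbar_emb (1,1))"
  \<comment> \<open>one signed permutation matrix for each of the six arrangements\<close>
  using assms
  apply (cases v1 rule: bitpair_cases; cases v2 rule: bitpair_cases; cases v3 rule: bitpair_cases; simp)
  subgoal by (rule bexI[of _ "vector [vector [0, 1, 0], vector [1, 0, 0], vector [0, 0, -1]]"]) (simp_all add: SO3_def Qbar_emb_def mconj_def mat3_defs)
  subgoal by (rule bexI[of _ "vector [vector [0, 0, 1], vector [1, 0, 0], vector [0, 1, 0]]"]) (simp_all add: SO3_def Qbar_emb_def mconj_def mat3_defs)
  subgoal by (rule bexI[of _ "mat 1"]) (simp_all add: SO3_def Qbar_emb_def mconj_def mat3_defs)
  subgoal by (rule bexI[of _ "vector [vector [0, 0, 1], vector [0, 1, 0], vector [-1, 0, 0]]"]) (simp_all add: SO3_def Qbar_emb_def mconj_def mat3_defs)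
  subgoal by (rule bexI[of _ "vector [vector [1, 0, 0], vector [0, 0, 1], vector [0, -1, 0]]"]) (simp_all add: SO3_def Qbar_emb_def mconj_def mat3_defs)
  subgoal by (rule bexI[of _ "vector [vector [0, 1, 0], vector [0, 0, 1], vector [1, 0, 0]]"]) (simp_all add: SO3_def Qbar_emb_def mconj_def mat3_defs)
  done

lemma Sigma3_realised_by_mconj:
  assumes s: "\<sigma> \<in> Sigma3"
  shows "\<exists>Q\<in>SO3. \<forall>p. Qbar_emb (\<sigma> p) = mconj Q (Qbar_emb p)"
proof -
  have b: "bij \<sigma>" and z: "\<sigma> (0,0) = (0,0)" using s by (auto simp: Sigma3_def)
  hence i: "inj \<sigma>" by (simp add: bij_is_inj)
  have ne: "\<sigma> p \<noteq> \<sigma> q" if "p \<noteq> q" for p q using i that unfolding inj_def by blast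
  obtain Q where Q: "Q \<in> SO3" "Qbar_emb (\<sigma> (1,0)) = mconj Q (Qbar_emb (1,0))"
     "Qbar_emb (\<sigma> (0,1)) = mconj Q (Qbar_emb (0,1))" "Qbar_emb (\<sigma> (1,1)) = mconj Q (Qbar_emb (1,1))"
  proof -
    have n1: "\<sigma> (1,0) \<noteq> (0,0)" using ne[of "(1,0)" "(0,0)"] z by simp
    have n2: "\<sigma> (0,1) \<noteq> (0,0)" using ne[of "(0,1)" "(0,0)"] z by simp
    have n3: "\<sigma> (1,1) \<noteq> (0,0)" using ne[of "(1,1)" "(0,0)"] z by simp
    have d1: "\<sigma> (1,0) \<noteq> \<sigma> (0,1)" using ne[of "(1,0)" "(0,1)"] by simp
    have d2: "\<sigma> (1,0) \<noteq> \<sigma> (1,1)" using ne[of "(1,0)" "(1,1)"] by simp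
    have d3: "\<sigma> (0,1) \<noteq> \<sigma> (1,1)" using ne[of "(0,1)" "(1,1)"] by simp
    show ?thesis using Qbar_relabel_by_mconj[OF n1 n2 n3 d1 d2 d3] that by blast
  qed
  have "Qbar_emb (\<sigma> p) = mconj Q (Qbar_emb p)" for p
    by (cases p rule: bitpair_cases) (simp_all add: Q z Qbar_emb_00 mconj_mat1)
  thus ?thesis using Q(1) by blast
qed

lemma Qbar_emb_SO3: "Qbar_emb p \<in> SO3"
  by (cases p rule: bitpair_cases;
      simp add: SO3_def Qbar_emb_def vec_eq_iff forall_3 matrix_matrix_mult_def sum_3 transpose_def mat_def det_3)

lemma Qbar_emb_commute: "Qbar_emb p ** Qbar_emb q = Qbar_emb q ** Qbar_emb p"
  by (simp add: Qbar_emb_def vec_eq_iff forall_3 matrix_matrix_mult_def sum_3 mult.commute)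

lemma Qbar_tuple_HomSO3: "y \<in> HomV4 n \<Longrightarrow> restrict (Qbar_emb \<circ> y) {..<n} \<in> HomSO3 n"
  by (auto simp: HomSO3_def Qbar_emb_SO3 Qbar_emb_commute)

lemma path_component_Qbar_tuple_Sigma3:
  assumes y: "y \<in> HomV4 n" and s: "\<sigma> \<in> Sigma3"
  shows "path_component_of (HomSO3_top n) (restrict (Qbar_emb \<circ> y) {..<n})
           (restrict (Qbar_emb \<circ> restrict (\<sigma> \<circ> y) {..<n}) {..<n})"
proof -
  obtain Q where Q: "Q \<in> SO3" "\<forall>p. Qbar_emb (\<sigma> p) = mconj Q (Qbar_emb p)" using Sigma3_realised_by_mconj[OF s] by blast
  have "path_component_of (HomSO3_top n) (restrict (Qbar_emb \<circ> y) {..<n})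
          (restrict (\<lambda>i. mconj Q (restrict (Qbar_emb \<circ> y) {..<n} i)) {..<n})"
    by (rule path_component_mconj_tuple[OF Qbar_tuple_HomSO3[OF y] Q(1)])
  moreover have "restrict (\<lambda>i. mconj Q (restrict (Qbar_emb \<circ> y) {..<n} i)) {..<n}
       = restrict (Qbar_emb \<circ> restrict (\<sigma> \<circ> y) {..<n}) {..<n}"
    using Q(2) by (simp add: restrict_def fun_eq_iff del: prod.collapse split_paired_All)
  ultimately show ?thesis by simp
qed

lemma path_component_Qbar_tuple_exists:
  assumes x: "x \<in> HomSO3 n"
  shows "\<exists>y\<in>HomV4 n. path_component_of (HomSO3_top n) (restrict (Qbar_emb \<circ> y) {..<n}) x"
proof -
  have S: "\<forall>i\<in>{..<n}. x i \<in> SO3" and C: "\<forall>i\<in>{..<n}. \<forall>j\<in>{..<n}. x i ** x j = x j ** x i"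
    using x by (auto simp: HomSO3_def)
  obtain Q where Q: "Q \<in> SO3" and D: "(\<forall>i\<in>{..<n}. \<exists>c s. c^2+s^2=1 \<and> mconj Q (x i) = rotx c s)
        \<or> (\<forall>i\<in>{..<n}. \<exists>p. mconj Q (x i) = Qbar_emb p)"
    using commuting_SO3_conj_torus_or_Qbar[OF S C] by blast
  have to_x: "path_component_of (HomSO3_top n) (restrict (\<lambda>i. mconj Q (x i)) {..<n}) x"
    using path_component_of_sym[OF path_component_mconj_tuple[OF x Q]] .
  from D show ?thesis
  proof
    assume H: "\<forall>i\<in>{..<n}. \<exists>c s. c^2+s^2=1 \<and> mconj Q (x i) = rotx c s"
    have "\<forall>i\<in>{..<n}. \<exists>th. mconj Q (x i) = rotx (cos th) (sin th)"
      using H sincos_total_2pi by metis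
    then obtain th where "\<forall>i\<in>{..<n}. mconj Q (x i) = rotx (cos (th i)) (sin (th i))"
      by (metis bchoice)
    then have "restrict (\<lambda>i. mconj Q (x i)) {..<n} = restrict (\<lambda>i. rotx (cos (th i)) (sin (th i))) {..<n}"
      by (simp add: restrict_def fun_eq_iff)
    then have "path_component_of (HomSO3_top n) (restrict (\<lambda>i. rotx (cos (th i)) (sin (th i))) {..<n}) x"
      using to_x by simp
    then have "path_component_of (HomSO3_top n) (restrict (\<lambda>_. mat 1) {..<n}) x"
      by (rule path_component_of_trans[OF path_component_rotx_tuple])
    moreover have "restrict (Qbar_emb \<circ> restrict (\<lambda>_. (0, 0)) {..<n}) {..<n} = restrict (\<lambda>_. mat 1) {..<n}"
      by (simp add: Qbar_emb_00 restrict_def fun_eq_iff)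
    moreover have "restrict (\<lambda>_. (0, 0)) {..<n} \<in> HomV4 n" by (simp add: HomV4_def)
    ultimately show ?thesis by metis
  next
    assume "\<forall>i\<in>{..<n}. \<exists>p. mconj Q (x i) = Qbar_emb p"
    then obtain p where p: "\<forall>i\<in>{..<n}. mconj Q (x i) = Qbar_emb (p i)" by (metis bchoice)
    have "restrict (Qbar_emb \<circ> restrict p {..<n}) {..<n} = restrict (\<lambda>i. mconj Q (x i)) {..<n}"
      using p by (simp add: restrict_def fun_eq_iff)
    moreover have "restrict p {..<n} \<in> HomV4 n" by (simp add: HomV4_def)
    ultimately show ?thesis using to_x by metis
  qed
qed

lemma Qbar_emb_0_rotx: "Qbar_emb (0, b) = rotx (cos (if b = 0 then 0 else pi)) (sin (if b = 0 then 0 else pi))"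
  using bit_cases[of b] by (auto simp: Qbar_emb_def rotx_def vec_eq_iff forall_3)

lemma swap_Sigma3: "prod.swap \<in> Sigma3"
  by (simp add: Sigma3_def bij_def)

lemma path_component_Qbar_tuple_Z2:
  assumes a: "a \<in> HomZ2 n"
  shows "path_component_of (HomSO3_top n) (restrict (\<lambda>_. mat 1) {..<n})
            (restrict (Qbar_emb \<circ> restrict (\<lambda>i. (a i, 0)) {..<n}) {..<n})"
proof -
  \<comment> \<open>swapping the two factors moves the tuple into the rotations about the first axis\<close>
  define y0 where "y0 = restrict (\<lambda>i. (a i, 0::bit)) {..<n}"
  have y0V: "y0 \<in> HomV4 n" by (simp add: y0_def HomV4_def)
  have p1: "path_component_of (HomSO3_top n) (restrict (Qbar_emb \<circ> y0) {..<n})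
           (restrict (Qbar_emb \<circ> restrict (prod.swap \<circ> y0) {..<n}) {..<n})"
    by (rule path_component_Qbar_tuple_Sigma3[OF y0V swap_Sigma3])
  define th where "th i = (if a i = 0 then 0 else pi)" for i
  have "restrict (Qbar_emb \<circ> restrict (prod.swap \<circ> y0) {..<n}) {..<n} = restrict (\<lambda>i. rotx (cos (th i)) (sin (th i))) {..<n}"
    by (auto simp: y0_def prod.swap_def th_def Qbar_emb_0_rotx restrict_def fun_eq_iff)
  hence "path_component_of (HomSO3_top n) (restrict (\<lambda>_. mat 1) {..<n}) (restrict (Qbar_emb \<circ> restrict (prod.swap \<circ> y0) {..<n}) {..<n})"
    using path_component_rotx_tuple by simp
  hence "path_component_of (HomSO3_top n) (restrict (\<lambda>_. mat 1) {..<n}) (restrict (Qbar_emb \<circ> y0) {..<n})"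
    by (rule path_component_of_trans[OF _ path_component_of_sym[OF p1]])
  thus ?thesis unfolding y0_def .
qed

section \<open>\<open>\<Sigma>\<^sub>3\<close>-orbits of tuples in \<open>(\<int>/2)\<^sup>2\<close>\<close>

lemma Sigma3_id: "id \<in> Sigma3" by (simp add: Sigma3_def)

lemma Sigma3_comp: "\<sigma> \<in> Sigma3 \<Longrightarrow> \<tau> \<in> Sigma3 \<Longrightarrow> \<tau> \<circ> \<sigma> \<in> Sigma3"
  by (auto simp: Sigma3_def bij_comp)

lemma Sigma3_inv: "\<sigma> \<in> Sigma3 \<Longrightarrow> inv \<sigma> \<in> Sigma3 \<and> (\<forall>z. inv \<sigma> (\<sigma> z) = z)"
proof -
  assume s: "\<sigma> \<in> Sigma3"
  hence b: "bij \<sigma>" and z: "\<sigma> (0,0) = (0,0)" by (auto simp: Sigma3_def)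
  have i: "\<forall>z. inv \<sigma> (\<sigma> z) = z" using b by (simp add: bij_is_inj)
  have "inv \<sigma> (0,0) = (0,0)" using i z by metis
  thus ?thesis using b i by (simp add: Sigma3_def bij_imp_bij_inv)
qed

lemma V4_orbit_self: "x \<in> HomV4 n \<Longrightarrow> x \<in> V4_orbit n x"
proof -
  assume x: "x \<in> HomV4 n"
  have "restrict (id \<circ> x) {..<n} = x" using x
    by (auto simp: HomV4_def PiE_def restrict_def extensional_def fun_eq_iff)
  thus ?thesis unfolding V4_orbit_def by (intro image_eqI[where x=id] Sigma3_id) simp
qed

lemma V4_orbit_act:
  assumes s: "\<sigma> \<in> Sigma3"
  shows "V4_orbit n (restrict (\<sigma> \<circ> x) {..<n}) = V4_orbit n x"
proof
  show "V4_orbit n (restrict (\<sigma> \<circ> x) {..<n}) \<subseteq> V4_orbit n x"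
  proof
    fix z assume "z \<in> V4_orbit n (restrict (\<sigma> \<circ> x) {..<n})"
    then obtain \<tau> where t: "\<tau> \<in> Sigma3" "z = restrict (\<tau> \<circ> restrict (\<sigma> \<circ> x) {..<n}) {..<n}"
      unfolding V4_orbit_def by blast
    show "z \<in> V4_orbit n x" unfolding V4_orbit_def
    proof (rule image_eqI[where x="\<tau> \<circ> \<sigma>"])
      show "z = restrict ((\<tau> \<circ> \<sigma>) \<circ> x) {..<n}" using t(2) by (simp add: restrict_def fun_eq_iff)
      show "\<tau> \<circ> \<sigma> \<in> Sigma3" by (rule Sigma3_comp[OF s t(1)])
    qed
  qed
next
  show "V4_orbit n x \<subseteq> V4_orbit n (restrict (\<sigma> \<circ> x) {..<n})"
  proof
    fix z assume "z \<in> V4_orbit n x"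
    then obtain \<tau> where t: "\<tau> \<in> Sigma3" "z = restrict (\<tau> \<circ> x) {..<n}"
      unfolding V4_orbit_def by blast
    have si: "inv \<sigma> \<in> Sigma3" "\<forall>z. inv \<sigma> (\<sigma> z) = z" using Sigma3_inv[OF s] by auto
    show "z \<in> V4_orbit n (restrict (\<sigma> \<circ> x) {..<n})" unfolding V4_orbit_def
    proof (rule image_eqI[where x="\<tau> \<circ> inv \<sigma>"])
      show "z = restrict ((\<tau> \<circ> inv \<sigma>) \<circ> restrict (\<sigma> \<circ> x) {..<n}) {..<n}"
        using t si(2) by (simp add: restrict_def fun_eq_iff del: split_paired_All)
      show "\<tau> \<circ> inv \<sigma> \<in> Sigma3" by (rule Sigma3_comp[OF si(1) t(1)])
    qed
  qed
qed

lemma V4_orbit_eq_imp: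
  assumes "y \<in> HomV4 n" "V4_orbit n x = V4_orbit n y"
  shows "\<exists>\<sigma>\<in>Sigma3. y = restrict (\<sigma> \<circ> x) {..<n}"
proof -
  have "y \<in> V4_orbit n x" using V4_orbit_self[OF assms(1)] assms(2) by simp
  thus ?thesis unfolding V4_orbit_def by blast
qed

definition V4_add :: "bit \<times> bit \<Rightarrow> bit \<times> bit \<Rightarrow> bit \<times> bit" where
  "V4_add a b = (fst a + fst b, snd a + snd b)"

lemma V4_add_third:
  assumes "a \<noteq> (0,0)" "b \<noteq> (0,0)" "a \<noteq> b"
  shows "V4_add a b \<noteq> (0,0) \<and> V4_add a b \<noteq> a \<and> V4_add a b \<noteq> b \<and> (\<forall>z. z = (0,0) \<or> z = a \<or> z = b \<or> z = V4_add a b)"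
proof -
  have all4: "\<And>z. z = (0,0) \<or> z = (0,1) \<or> z = (1,0) \<or> z = ((1::bit),(1::bit))"
    by (metis bitpair_cases)
  show ?thesis using assms
    by (cases a rule: bitpair_cases; cases b rule: bitpair_cases; simp add: V4_add_def; use all4 in blast)
qed

lemma V4_add_distinct:
  assumes "a \<noteq> (0,0)" "b \<noteq> (0,0)" "a \<noteq> b"
  shows "b \<noteq> a" "V4_add a b \<noteq> (0,0)" "V4_add a b \<noteq> a" "a \<noteq> V4_add a b"
    "V4_add a b \<noteq> b" "b \<noteq> V4_add a b"
  using V4_add_third[OF assms] assms by metis+

definition V4_relabel :: "bit \<times> bit \<Rightarrow> bit \<times> bit \<Rightarrow> bit \<times> bit \<Rightarrow> bit \<times> bit \<Rightarrow> bit \<times> bit \<Rightarrow> bit \<times> bit" where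
  "V4_relabel a b a' b' z = (if z = (0,0) then (0,0) else if z = a then a' else if z = b then b' else V4_add a' b')"

lemma V4_relabel_inverse:
  assumes a: "a \<noteq> (0,0)" "b \<noteq> (0,0)" "a \<noteq> b" and a': "a' \<noteq> (0,0)" "b' \<noteq> (0,0)" "a' \<noteq> b'"
  shows "V4_relabel a' b' a b (V4_relabel a b a' b' z) = z"
proof -
  note t = V4_add_third[OF a] and t' = V4_add_third[OF a']
  note F = a a' V4_add_distinct[OF a] V4_add_distinct[OF a']
  have "z = (0,0) \<or> z = a \<or> z = b \<or> z = V4_add a b" using t by blast
  thus ?thesis by (elim disjE) (simp_all only: V4_relabel_def F if_True if_False refl)
qed

lemma V4_relabel_Sigma3:
  assumes a: "a \<noteq> (0,0)" "b \<noteq> (0,0)" "a \<noteq> b" and a': "a' \<noteq> (0,0)" "b' \<noteq> (0,0)" "a' \<noteq> b'"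
  shows "V4_relabel a b a' b' \<in> Sigma3"
proof -
  have "V4_relabel a' b' a b \<circ> V4_relabel a b a' b' = id" using V4_relabel_inverse[OF a a'] by (simp add: fun_eq_iff)
  moreover have "V4_relabel a b a' b' \<circ> V4_relabel a' b' a b = id" using V4_relabel_inverse[OF a' a] by (simp add: fun_eq_iff)
  ultimately have "bij (V4_relabel a b a' b')" using o_bij by blast
  thus ?thesis by (simp add: Sigma3_def V4_relabel_def)
qed

lemma V4_relabel_determined:
  assumes a: "a \<noteq> (0,0)" "b \<noteq> (0,0)" "a \<noteq> b" and a': "a' \<noteq> (0,0)" "b' \<noteq> (0,0)" "a' \<noteq> b'"
    and e1: "generates_V4 z a = generates_V4 w a'" and e2: "generates_V4 z b = generates_V4 w b'"
  shows "w = V4_relabel a b a' b' z"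
proof -
  note t = V4_add_third[OF a] and t' = V4_add_third[OF a']
  note F = a a' V4_add_distinct[OF a] V4_add_distinct[OF a']
  have z: "z = (0,0) \<or> z = a \<or> z = b \<or> z = V4_add a b" using t by blast
  have w: "w = (0,0) \<or> w = a' \<or> w = b' \<or> w = V4_add a' b'" using t' by blast
  show ?thesis using z w e1 e2
    by (elim disjE) (simp_all only: V4_relabel_def generates_V4_def F if_True if_False refl simp_thms)
qed

lemma V4_same_generation_pattern:
  assumes x: "x \<in> HomV4 n" and y: "y \<in> HomV4 n"
    and P: "\<forall>i<n. \<forall>j<n. generates_V4 (x i) (x j) = generates_V4 (y i) (y j)"
    and i0: "i0 < n" and j0: "j0 < n" and o: "generates_V4 (x i0) (x j0)"
  shows "\<exists>\<sigma>\<in>Sigma3. y = restrict (\<sigma> \<circ> x) {..<n}"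
proof -
  have o': "generates_V4 (y i0) (y j0)" using P i0 j0 o by blast
  have a: "x i0 \<noteq> (0,0)" "x j0 \<noteq> (0,0)" "x i0 \<noteq> x j0" using o by (auto simp: generates_V4_def)
  have a': "y i0 \<noteq> (0,0)" "y j0 \<noteq> (0,0)" "y i0 \<noteq> y j0" using o' by (auto simp: generates_V4_def)
  define \<sigma> where "\<sigma> = V4_relabel (x i0) (x j0) (y i0) (y j0)"
  have s: "\<sigma> \<in> Sigma3" unfolding \<sigma>_def by (rule V4_relabel_Sigma3[OF a a'])
  have k: "y k = \<sigma> (x k)" if "k < n" for k
    unfolding \<sigma>_def
    by (rule V4_relabel_determined[OF a a']) (use P that i0 j0 in blast)+
  have "y = restrict (\<sigma> \<circ> x) {..<n}"
  proof
    fix k show "y k = restrict (\<sigma> \<circ> x) {..<n} k"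
      using k y by (cases "k < n") (auto simp: HomV4_def PiE_def extensional_def)
  qed
  thus ?thesis using s by blast
qed

lemma Sigma3_move_to_10:
  assumes "p \<noteq> (0,0)" shows "\<exists>\<sigma>\<in>Sigma3. \<sigma> p = (1,0)"
proof -
  define q where "q = (if p = (0,1) then (1,0) else (0::bit,1::bit))"
  have q: "q \<noteq> (0,0)" "p \<noteq> q" by (auto simp: q_def)
  have "V4_relabel p q (1,0) (0,1) \<in> Sigma3"
    by (rule V4_relabel_Sigma3) (use assms q in auto)
  moreover have "V4_relabel p q (1,0) (0,1) p = (1,0)" using assms by (simp add: V4_relabel_def)
  ultimately show ?thesis by blast
qed

lemma V4_orbit_cyclic:
  assumes x: "x \<in> HomV4 n" and C: "\<forall>i<n. \<forall>j<n. \<not> generates_V4 (x i) (x j)"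
  shows "V4_orbit n x \<in> top_map n ` HomZ2 n"
proof -
  obtain p where p0: "p \<noteq> (0,0)" and xp: "\<forall>i<n. x i = (0,0) \<or> x i = p"
  proof (cases "\<exists>k<n. x k \<noteq> (0,0)")
    case True
    then obtain k where k: "k < n" "x k \<noteq> (0,0)" by blast
    then have "\<forall>i<n. x i = (0,0) \<or> x i = x k" using C by (auto simp: generates_V4_def)
    then show ?thesis using that k(2) by blast
  next
    case False
    then show ?thesis using that[of "(1,0)"] by auto
  qed
  obtain \<sigma> where s: "\<sigma> \<in> Sigma3" "\<sigma> p = (1,0)" using Sigma3_move_to_10[OF p0] by blast
  have s0: "\<sigma> (0,0) = (0,0)" using s(1) by (simp add: Sigma3_def)
  define a where "a = restrict (\<lambda>i. fst (\<sigma> (x i))) {..<n}"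
  have "restrict (\<lambda>i. (a i, 0)) {..<n} = restrict (\<sigma> \<circ> x) {..<n}"
    using xp s(2) s0 by (auto simp: a_def restrict_def fun_eq_iff)
  then have "top_map n a = V4_orbit n x" by (simp add: top_map_def V4_orbit_act[OF s(1)])
  moreover have "a \<in> HomZ2 n" by (simp add: a_def HomZ2_def)
  ultimately show ?thesis by blast
qed

section \<open>The push-out square\<close>

lemma set_pushout_onto_point:
  assumes f: "f \<in> A \<rightarrow> B" and a0: "a0 \<in> A" and h: "h ` B = D"
    and square: "\<forall>a\<in>A. h (f a) = k ()"
    and fibres: "\<And>b b'. b \<in> B \<Longrightarrow> b' \<in> B \<Longrightarrow> h b = h b' \<Longrightarrow> b = b' \<or> (b \<in> f ` A \<and> b' \<in> f ` A)"
  shows "set_pushout TYPE('z) A B {()} D f (\<lambda>_. ()) h k"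
proof -
  have universal: "\<exists>w. (\<forall>b\<in>B. w (h b) = u b) \<and> (\<forall>c\<in>{()}. w (k c) = v c) \<and>
      (\<forall>w'. (\<forall>b\<in>B. w' (h b) = u b) \<and> (\<forall>c\<in>{()}. w' (k c) = v c) \<longrightarrow> (\<forall>d\<in>D. w' d = w d))"
    if uv: "\<forall>a\<in>A. u (f a) = v ()" for u :: "'b \<Rightarrow> 'z" and v :: "unit \<Rightarrow> 'z"
  proof -
    define w where "w d = (if \<exists>b\<in>B - f ` A. h b = d then u (SOME b. b \<in> B - f ` A \<and> h b = d) else v ())"
      for d
    have w_h: "w (h b) = u b" if b: "b \<in> B" for b
    proof (cases "b \<in> f ` A")
      case True
      then have "\<not> (\<exists>b'\<in>B - f ` A. h b' = h b)" using fibres b by blast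
      then show ?thesis using True uv by (auto simp: w_def)
    next
      case False
      then have ex: "\<exists>b'. b' \<in> B - f ` A \<and> h b' = h b" using b by blast
      have sel: "(SOME b'. b' \<in> B - f ` A \<and> h b' = h b) = b"
        using someI_ex[OF ex] fibres b by blast
      have "\<exists>b'\<in>B - f ` A. h b' = h b" using ex by blast
      then have "w (h b) = u (SOME b'. b' \<in> B - f ` A \<and> h b' = h b)"
        unfolding w_def by (rule if_P)
      with sel show ?thesis by simp
    qed
    have "w (k ()) = v ()" using w_h[of "f a0"] f a0 square uv by auto
    then show ?thesis using w_h h by (intro exI[of _ w]) auto
  qed
  have "k () \<in> D" using f a0 h square by force
  then show ?thesis
    unfolding set_pushout_def using f h square universal by auto
qed

lemma path_component_of_set_eq:
  "path_component_of X a b \<Longrightarrow> path_component_of_set X a = path_component_of_set X b"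
  by (metis path_component_of_equiv)

lemma path_component_of_set_eq_imp:
  "b \<in> topspace X \<Longrightarrow> path_component_of_set X a = path_component_of_set X b \<Longrightarrow> path_component_of X a b"
  by (metis mem_Collect_eq path_component_of_refl)

lemma right_rep_Sigma3_invariant:
  assumes "x \<in> HomV4 n" "y \<in> HomV4 n" "V4_orbit n x = V4_orbit n y"
  shows "right_rep n x = right_rep n y"
proof -
  obtain \<sigma> where "\<sigma> \<in> Sigma3" "y = restrict (\<sigma> \<circ> x) {..<n}" using V4_orbit_eq_imp assms(2,3) by blast
  then have "path_component_of (HomSO3_top n) (restrict (Qbar_emb \<circ> x) {..<n}) (restrict (Qbar_emb \<circ> y) {..<n})"
    using path_component_Qbar_tuple_Sigma3 assms(1) by simp
  then show ?thesis
    unfolding right_rep_def by (rule path_component_of_set_eq)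
qed

lemma right_map_V4_orbit:
  assumes x: "x \<in> HomV4 n"
  shows "right_map n (V4_orbit n x) = right_rep n x"
proof -
  let ?x' = "SOME x'. x' \<in> HomV4 n \<and> V4_orbit n x' = V4_orbit n x"
  have "?x' \<in> HomV4 n \<and> V4_orbit n ?x' = V4_orbit n x" by (rule someI[of _ x]) (simp add: x)
  then show ?thesis unfolding right_map_def using right_rep_Sigma3_invariant x by blast
qed

lemma right_map_top_map:
  assumes a: "a \<in> HomZ2 n"
  shows "right_map n (top_map n a) = bottom_map n ()"
proof -
  have "restrict (\<lambda>i. (a i, 0)) {..<n} \<in> HomV4 n" by (simp add: HomV4_def)
  then have "right_map n (top_map n a) = right_rep n (restrict (\<lambda>i. (a i, 0)) {..<n})"
    unfolding top_map_def by (rule right_map_V4_orbit)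
  also have "\<dots> = bottom_map n ()"
    using path_component_Qbar_tuple_Z2[OF a] unfolding right_rep_def bottom_map_def
    by (simp add: path_component_of_set_eq)
  finally show ?thesis .
qed

lemma right_map_image: "right_map n ` HomV4_mod_Sigma3 n = pi0_HomSO3 n"
proof -
  have "right_map n ` HomV4_mod_Sigma3 n = right_rep n ` HomV4 n"
    unfolding HomV4_mod_Sigma3_def image_image by (rule image_cong[OF refl right_map_V4_orbit])
  also have "\<dots> = path_component_of_set (HomSO3_top n) ` HomSO3 n"
  proof (intro equalityI image_subsetI)
    fix x assume "x \<in> HomV4 n"
    then show "right_rep n x \<in> path_component_of_set (HomSO3_top n) ` HomSO3 n"
      unfolding right_rep_def by (intro imageI Qbar_tuple_HomSO3)
  next
    fix x assume "x \<in> HomSO3 n"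
    then obtain y where y: "y \<in> HomV4 n"
      and "path_component_of (HomSO3_top n) (restrict (Qbar_emb \<circ> y) {..<n}) x"
      using path_component_Qbar_tuple_exists by blast
    then have "path_component_of_set (HomSO3_top n) x = right_rep n y"
      unfolding right_rep_def by (simp add: path_component_of_set_eq)
    with y show "path_component_of_set (HomSO3_top n) x \<in> right_rep n ` HomV4 n" by blast
  qed
  finally show ?thesis by (simp add: pi0_HomSO3_def path_components_of_def topspace_HomSO3_top)
qed

lemma right_map_eq_imp:
  assumes b: "b \<in> HomV4_mod_Sigma3 n" and b': "b' \<in> HomV4_mod_Sigma3 n"
    and eq: "right_map n b = right_map n b'"
  shows "b = b' \<or> (b \<in> top_map n ` HomZ2 n \<and> b' \<in> top_map n ` HomZ2 n)"
proof -
  obtain x y where x: "x \<in> HomV4 n" "b = V4_orbit n x" and y: "y \<in> HomV4 n" "b' = V4_orbit n y"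
    using b b' by (auto simp: HomV4_mod_Sigma3_def)
  have "right_rep n x = right_rep n y" using eq x y by (simp add: right_map_V4_orbit)
  then have path: "path_component_of (HomSO3_top n)
      (restrict (Qbar_emb \<circ> x) {..<n}) (restrict (Qbar_emb \<circ> y) {..<n})"
    unfolding right_rep_def
    by (rule path_component_of_set_eq_imp[rotated])
      (simp add: Qbar_tuple_HomSO3[OF y(1)] topspace_HomSO3_top)
  have pattern: "\<forall>i<n. \<forall>j<n. generates_V4 (x i) (x j) = generates_V4 (y i) (y j)"
  proof (intro allI impI)
    fix i j assume ij: "i < n" "j < n"
    then show "generates_V4 (x i) (x j) = generates_V4 (y i) (y j)"
      using pair_trace_sign_path_invariant[OF path ij] ij by (simp add: pair_trace_Qbar_neg_iff)
  qed
  show ?thesis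
  proof (cases "\<exists>i<n. \<exists>j<n. generates_V4 (x i) (x j)")
    case True
    then obtain i0 j0 where "i0 < n" "j0 < n" "generates_V4 (x i0) (x j0)" by blast
    then obtain \<sigma> where \<sigma>: "\<sigma> \<in> Sigma3" and y_\<sigma>: "y = restrict (\<sigma> \<circ> x) {..<n}"
      using V4_same_generation_pattern[OF x(1) y(1) pattern] by blast
    have "b' = b" unfolding x(2) y(2) y_\<sigma> by (rule V4_orbit_act[OF \<sigma>])
    then show ?thesis by simp
  next
    case False
    then have "\<forall>i<n. \<forall>j<n. \<not> generates_V4 (x i) (x j)" by blast
    moreover from this have "\<forall>i<n. \<forall>j<n. \<not> generates_V4 (y i) (y j)" using pattern by blast
    ultimately show ?thesis using V4_orbit_cyclic[OF x(1)] V4_orbit_cyclic[OF y(1)] x(2) y(2) by blast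
  qed
qed

theorem mainTheorem8:
  fixes n :: nat
  shows "(\<forall>x\<in>HomV4 n. \<forall>y\<in>HomV4 n. V4_orbit n x = V4_orbit n y \<longrightarrow> right_rep n x = right_rep n y)
    \<and> set_pushout TYPE('z) (HomZ2 n) (HomV4_mod_Sigma3 n) {()} (pi0_HomSO3 n)
        (top_map n) (\<lambda>_. ()) (right_map n) (bottom_map n)"
proof
  show "\<forall>x\<in>HomV4 n. \<forall>y\<in>HomV4 n. V4_orbit n x = V4_orbit n y \<longrightarrow> right_rep n x = right_rep n y"
    using right_rep_Sigma3_invariant by blast
  show "set_pushout TYPE('z) (HomZ2 n) (HomV4_mod_Sigma3 n) {()} (pi0_HomSO3 n)
      (top_map n) (\<lambda>_. ()) (right_map n) (bottom_map n)"
  proof (rule set_pushout_onto_point)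
    show "top_map n \<in> HomZ2 n \<rightarrow> HomV4_mod_Sigma3 n"
    proof
      fix a assume "a \<in> HomZ2 n"
      have "restrict (\<lambda>i. (a i, 0)) {..<n} \<in> HomV4 n" by (simp add: HomV4_def)
      then show "top_map n a \<in> HomV4_mod_Sigma3 n"
        unfolding top_map_def HomV4_mod_Sigma3_def by (rule imageI)
    qed
    show "restrict (\<lambda>_. 0) {..<n} \<in> HomZ2 n" by (simp add: HomZ2_def)
    show "right_map n ` HomV4_mod_Sigma3 n = pi0_HomSO3 n" by (rule right_map_image)
    show "\<forall>a\<in>HomZ2 n. right_map n (top_map n a) = bottom_map n ()" using right_map_top_map by blast
  qed (rule right_map_eq_imp)
qed

end
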